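(* Let $\delta:\mathbb{R}\to\mathbb{R}$ be a posterior median function $x\mapsto\delta(x;w,b,c)$ for fixed $(w,b,c)$, and assume it is continuous and that there exist $t_1,t_2>0$ such that $\delta(x)=0$ if and only if $-t_2\le x\le t_1$, $\delta$ is strictly increasing on $(t_1,\infty)$ and on $(-\infty,-t_2)$, and $\delta$ maps $(t_1,\infty)$ onto $(0,\infty)$ and $(-\infty,-t_2)$ onto $(-\infty,0)$. Let $\delta^{-1}(t)$ for $t\ne0$ denote the inverse of $\delta$ restricted to $(t_1,\infty)\cup(-\infty,-t_2)$, and define the penalty $$\mathcal{P}(\theta)=\int_0^{\theta}\bigl(\delta^{-1}(t)-t\bigr)\,dt\ \ (\theta\ne0),\qquad \mathcal{P}(0)=0.$$ Then for every $x\in\mathbb{R}$, the minimizer of $\theta\mapsto\frac12(x-\theta)^2+\mathcal{P}(\theta)$ over $\theta\in\mathbb{R}$ is $\theta=\delta(x)$.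
   Context: Setting: $X\mid\mu\sim N(\mu,1)$ with prior $\mu\sim(1-w)\delta_0+w\,\gamma(\cdot;b,c)$, $\delta_0$ the point mass at $0$ and $\gamma(\cdot;b,c)$ a location-scale density with scale $b>0$ and location $c$; $\delta(x;w,b,c)$ is the posterior median of $\mu$ given $X=x$. The integral $\int_0^\theta$ for $\theta<0$ means $-\int_\theta^0$. *)

theory Defs
  imports "HOL-Probability.Probability"
begin

definition is_density :: "(real \<Rightarrow> real) \<Rightarrow> bool" where
  "is_density g \<longleftrightarrow> (\<forall>x. 0 \<le> g x) \<and> integrable lborel g \<and> integral\<^sup>L lborel g = 1"

definition gamma_ls :: "(real \<Rightarrow> real) \<Rightarrow> real \<Rightarrow> real \<Rightarrow> real \<Rightarrow> real" where
  "gamma_ls g b c mu = g ((mu - c) / b) / b"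

text \<open>Unnormalised posterior mass of a set A of values of mu given X = x under the prior
  (1-w) delta_0 + w gamma(.;b,c) and X | mu ~ N(mu,1).\<close>
definition post_mass ::
  "(real \<Rightarrow> real) \<Rightarrow> real \<Rightarrow> real \<Rightarrow> real \<Rightarrow> real \<Rightarrow> real set \<Rightarrow> real" where
  "post_mass g w b c x A =
     (1 - w) * std_normal_density x * indicator A 0
     + w * (LINT mu:A|lborel. gamma_ls g b c mu * std_normal_density (x - mu))"

definition is_posterior_median ::
  "(real \<Rightarrow> real) \<Rightarrow> real \<Rightarrow> real \<Rightarrow> real \<Rightarrow> real \<Rightarrow> real \<Rightarrow> bool" where
  "is_posterior_median g w b c x m \<longleftrightarrow>
     post_mass g w b c x {..m} \<ge> post_mass g w b c x UNIV / 2 \<and>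
     post_mass g w b c x {m..} \<ge> post_mass g w b c x UNIV / 2"

definition delta_inv :: "(real \<Rightarrow> real) \<Rightarrow> real \<Rightarrow> real \<Rightarrow> real \<Rightarrow> real" where
  "delta_inv \<delta> t1 t2 t = the_inv_into ({t1<..} \<union> {..< -t2}) \<delta> t"

definition penalty :: "(real \<Rightarrow> real) \<Rightarrow> real \<Rightarrow> real \<Rightarrow> real \<Rightarrow> real" where
  "penalty \<delta> t1 t2 \<theta> =
     (if \<theta> = 0 then 0
      else if 0 < \<theta> then integral {0..\<theta>} (\<lambda>t. delta_inv \<delta> t1 t2 t - t)
      else - integral {\<theta>..0} (\<lambda>t. delta_inv \<delta> t1 t2 t - t))"

end

theory Submission
  imports Defs
begin

text \<open>Extended by \<open>0\<close> at \<open>0\<close>, the inverse \<open>\<delta>\<^sup>-\<^sup>1\<close> is strictly increasing on the whole line, and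
  the objective \<open>(x - \<theta>)\<^sup>2/2 + P \<theta>\<close> equals \<open>x\<^sup>2/2\<close> plus the oriented integral of
  \<open>\<delta>\<^sup>-\<^sup>1 t - x\<close> from \<open>0\<close> to \<open>\<theta>\<close>. This integrand is increasing, negative left of \<open>\<delta> x\<close> and
  positive right of it: for \<open>x\<close> outside \<open>[-t2, t1]\<close> because \<open>\<delta>\<^sup>-\<^sup>1 (\<delta> x) = x\<close>, and inside
  because then \<open>\<delta> x = 0\<close> while \<open>\<delta>\<^sup>-\<^sup>1\<close> sends positive values beyond \<open>t1\<close> and negative ones
  below \<open>-t2\<close>. So the integral is strictly minimal at \<open>\<theta> = \<delta> x\<close>. Only this thresholding shape
  of \<open>\<delta>\<close> matters.\<close>

definition oriented_integral :: "(real \<Rightarrow> real) \<Rightarrow> real \<Rightarrow> real \<Rightarrow> real" where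
  "oriented_integral f a b = (if a \<le> b then integral {a..b} f else - integral {b..a} f)"

lemma oriented_integral_join:
  assumes "\<And>a b. f integrable_on {a..b}"
  shows "oriented_integral f a c = oriented_integral f a b + oriented_integral f b c"
proof -
  have "integral {p..q} f + integral {q..r} f = integral {p..r} f" if "p \<le> q" "q \<le> r" for p q r
    using Henstock_Kurzweil_Integration.integral_combine that assms by blast
  from this[of a b c] this[of a c b] this[of b a c] this[of b c a] this[of c a b] this[of c b a]
  show ?thesis
    unfolding oriented_integral_def by (cases "a \<le> b"; cases "b \<le> c"; cases "a \<le> c") auto
qed

lemma oriented_integral_add:
  assumes "\<And>a b. f integrable_on {a..b}" and "\<And>a b. g integrable_on {a..b}"
  shows "oriented_integral (\<lambda>t. f t + g t) a b = oriented_integral f a b + oriented_integral g a b"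
  unfolding oriented_integral_def using assms by (simp add: integral_add)

lemma oriented_integral_ident_minus:
  "oriented_integral (\<lambda>t. t - x) a b = (b\<^sup>2 - a\<^sup>2) / 2 - x * (b - a)"
proof -
  have I: "integral {p..q} (\<lambda>t. t - x) = (q\<^sup>2 - p\<^sup>2) / 2 - x * (q - p)" if "p \<le> q" for p q
    using that by (subst integral_diff) (auto simp: ident_integrable_on)
  show ?thesis
    unfolding oriented_integral_def by (cases "a \<le> b") (simp_all add: I field_simps)
qed

lemma integral_pos_if_mono_on:
  fixes f :: "real \<Rightarrow> real"
  assumes "a < b" and mono: "mono_on {a..b} f" and pos: "\<And>t. a < t \<Longrightarrow> t \<le> b \<Longrightarrow> 0 < f t"
  shows "0 < integral {a..b} f"
proof -
  define m where "m = (a + b) / 2"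
  have m: "a < m" "m < b" using \<open>a < b\<close> by (auto simp: m_def)
  have int: "f integrable_on {a..b}" using mono by (rule integrable_on_mono_on)
  have "0 \<le> integral {a<..<m} f"
    using pos m integrable_on_subinterval[OF int, of a m]
    by (intro integral_nonneg) (auto simp: integrable_on_open_interval_real intro!: less_imp_le pos)
  also have "\<dots> = integral {a..m} f" by (simp add: integral_open_interval_real)
  finally have left: "0 \<le> integral {a..m} f" .
  have "0 < integral {m..b} (\<lambda>_. f m)" using pos[of m] m by simp
  also have "\<dots> \<le> integral {m..b} f"
    using m integrable_on_subinterval[OF int, of m b]
    by (intro integral_le) (auto intro: mono_onD[OF mono])
  finally show ?thesis
    using left Henstock_Kurzweil_Integration.integral_combine[OF less_imp_le less_imp_le int, OF m] by linarith
qed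

lemma integral_neg_if_mono_on:
  fixes f :: "real \<Rightarrow> real"
  assumes "a < b" and mono: "mono_on {a..b} f" and neg: "\<And>t. a \<le> t \<Longrightarrow> t < b \<Longrightarrow> f t < 0"
  shows "integral {a..b} f < 0"
proof -
  have "0 < integral {-b..-a} (\<lambda>t. - f (- t))"
    using \<open>a < b\<close> neg by (intro integral_pos_if_mono_on) (auto intro!: mono_onI mono_onD[OF mono])
  then show ?thesis by simp
qed

lemma oriented_integral_strict_argmin:
  fixes f :: "real \<Rightarrow> real"
  assumes "mono f" and "\<And>t. t < s \<Longrightarrow> f t < 0" and "\<And>t. s < t \<Longrightarrow> 0 < f t" and "\<theta> \<noteq> s"
  shows "oriented_integral f a s < oriented_integral f a \<theta>"
proof -
  have mono_on: "mono_on {p..q} f" for p q using \<open>mono f\<close> by (simp add: mono_on_def monoD)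
  have "0 < oriented_integral f s \<theta>"
  proof (cases "s < \<theta>")
    case True
    then show ?thesis using assms(3) mono_on
      by (auto simp: oriented_integral_def intro!: integral_pos_if_mono_on)
  next
    case False
    then have "\<theta> < s" using \<open>\<theta> \<noteq> s\<close> by simp
    then show ?thesis using assms(2) mono_on
      by (auto simp: oriented_integral_def intro!: integral_neg_if_mono_on)
  qed
  moreover have "oriented_integral f a \<theta> = oriented_integral f a s + oriented_integral f s \<theta>"
    using mono_on by (intro oriented_integral_join integrable_on_mono_on)
  ultimately show ?thesis by simp
qed

locale thresholding_rule =
  fixes \<delta> :: "real \<Rightarrow> real" and t1 t2 :: real
  assumes t_pos: "0 < t1" "0 < t2"
    and zero: "\<forall>x. \<delta> x = 0 \<longleftrightarrow> (- t2 \<le> x \<and> x \<le> t1)"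
    and mono_r: "strict_mono_on {t1<..} \<delta>"
    and mono_l: "strict_mono_on {..< - t2} \<delta>"
    and onto_r: "\<delta> ` {t1<..} = {0<..}"
    and onto_l: "\<delta> ` {..< - t2} = {..<0}"
begin

abbreviation branches :: "real set" where
  "branches \<equiv> {t1<..} \<union> {..< - t2}"

lemma strict_mono_on_branches: "strict_mono_on branches \<delta>"
proof (rule strict_mono_onI)
  fix r s assume "r \<in> branches" "s \<in> branches" "r < s"
  moreover have "0 < \<delta> s" if "t1 < s" using onto_r that by auto
  moreover have "\<delta> r < 0" if "r < - t2" using onto_l that by auto
  ultimately show "\<delta> r < \<delta> s"
    using strict_mono_onD[OF mono_r, of r s] strict_mono_onD[OF mono_l, of r s] t_pos by auto
qed

lemma inj_on_branches: "inj_on \<delta> branches"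
  by (rule strict_mono_on_imp_inj_on[OF strict_mono_on_branches])

lemma delta_inv_delta: "x \<in> branches \<Longrightarrow> delta_inv \<delta> t1 t2 (\<delta> x) = x"
  unfolding delta_inv_def by (rule the_inv_into_f_f[OF inj_on_branches])

lemma delta_inv_pos:
  assumes "0 < s"
  shows "t1 < delta_inv \<delta> t1 t2 s" and "\<delta> (delta_inv \<delta> t1 t2 s) = s"
proof -
  obtain y where y: "t1 < y" "\<delta> y = s" using onto_r assms by (metis greaterThan_iff imageE)
  then show "t1 < delta_inv \<delta> t1 t2 s" "\<delta> (delta_inv \<delta> t1 t2 s) = s"
    using delta_inv_delta[of y] by auto
qed

lemma delta_inv_neg:
  assumes "s < 0"
  shows "delta_inv \<delta> t1 t2 s < - t2" and "\<delta> (delta_inv \<delta> t1 t2 s) = s"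
proof -
  obtain y where y: "y < - t2" "\<delta> y = s" using onto_l assms by (metis lessThan_iff imageE)
  then show "delta_inv \<delta> t1 t2 s < - t2" "\<delta> (delta_inv \<delta> t1 t2 s) = s"
    using delta_inv_delta[of y] by auto
qed

text \<open>At \<open>0\<close>, outside the image of the branches, \<open>delta_inv\<close> is an unspecified junk value;
  redefining it there as \<open>0\<close> makes the inverse strictly increasing without changing any integral.\<close>
definition inv_rule :: "real \<Rightarrow> real" where
  "inv_rule t = (if t = 0 then 0 else delta_inv \<delta> t1 t2 t)"

lemma strict_mono_inv_rule: "strict_mono inv_rule"
proof (rule strict_monoI)
  fix s t :: real assume "s < t"
  have branch: "inv_rule s \<in> branches \<and> \<delta> (inv_rule s) = s" if "s \<noteq> 0" for s
    using that delta_inv_pos[of s] delta_inv_neg[of s] by (cases "0 < s") (auto simp: inv_rule_def)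
  show "inv_rule s < inv_rule t"
  proof (cases "s = 0 \<or> t = 0")
    case True
    then show ?thesis
      using \<open>s < t\<close> t_pos delta_inv_pos[of t] delta_inv_neg[of s] by (auto simp: inv_rule_def)
  next
    case False
    then show ?thesis
      using branch[of s] branch[of t] \<open>s < t\<close> strict_mono_on_less[OF strict_mono_on_branches] by metis
  qed
qed

lemma inv_rule_sign:
  "(t < \<delta> x \<longrightarrow> inv_rule t < x) \<and> (\<delta> x < t \<longrightarrow> x < inv_rule t)"
proof (cases "x \<in> branches")
  case True
  then have "inv_rule (\<delta> x) = x"
    using delta_inv_delta zero by (auto simp: inv_rule_def)
  then show ?thesis
    using strict_mono_less[OF strict_mono_inv_rule] by metis
next
  case False
  then have "\<delta> x = 0" "- t2 \<le> x" "x \<le> t1" using zero by auto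
  then show ?thesis
    using delta_inv_pos[of t] delta_inv_neg[of t] t_pos by (auto simp: inv_rule_def)
qed

lemma inv_rule_integrable: "inv_rule integrable_on {a..b}"
  using strict_mono_inv_rule
  by (intro integrable_on_mono_on) (simp add: mono_on_def strict_mono_less_eq)

lemma penalty_eq_oriented_integral:
  "penalty \<delta> t1 t2 \<theta> = oriented_integral (\<lambda>t. inv_rule t - t) 0 \<theta>"
proof -
  have "integral {a..b} (\<lambda>t. delta_inv \<delta> t1 t2 t - t) = integral {a..b} (\<lambda>t. inv_rule t - t)" for a b
    by (rule integral_spike[of "{0}"]) (auto simp: inv_rule_def)
  then show ?thesis
    by (auto simp: penalty_def oriented_integral_def)
qed

lemma objective_eq_oriented_integral:
  "(1/2) * (x - \<theta>)\<^sup>2 + penalty \<delta> t1 t2 \<theta> = x\<^sup>2 / 2 + oriented_integral (\<lambda>t. inv_rule t - x) 0 \<theta>"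
proof -
  have "oriented_integral (\<lambda>t. inv_rule t - x) 0 \<theta>
      = oriented_integral (\<lambda>t. (inv_rule t - t) + (t - x)) 0 \<theta>"
    by simp
  also have "\<dots> = penalty \<delta> t1 t2 \<theta> + (\<theta>\<^sup>2 / 2 - x * \<theta>)"
    using inv_rule_integrable
    by (subst oriented_integral_add)
       (auto simp: penalty_eq_oriented_integral oriented_integral_ident_minus ident_integrable_on
             intro!: integrable_diff)
  finally show ?thesis by (simp add: power2_eq_square algebra_simps)
qed

end

theorem mainTheorem6:
  fixes g :: "real \<Rightarrow> real" and w b c t1 t2 :: real and \<delta> :: "real \<Rightarrow> real"
  assumes dens: "is_density g"
    and w: "0 \<le> w" "w \<le> 1" and b: "0 < b"
    and median: "\<forall>x. is_posterior_median g w b c x (\<delta> x)"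
    and cont: "continuous_on UNIV \<delta>"
    and t_pos: "0 < t1" "0 < t2"
    and zero: "\<forall>x. \<delta> x = 0 \<longleftrightarrow> (- t2 \<le> x \<and> x \<le> t1)"
    and mono_r: "strict_mono_on {t1<..} \<delta>"
    and mono_l: "strict_mono_on {..< - t2} \<delta>"
    and onto_r: "\<delta> ` {t1<..} = {0<..}"
    and onto_l: "\<delta> ` {..< - t2} = {..<0}"
  shows "(\<forall>\<theta>. (1/2) * (x - \<delta> x)^2 + penalty \<delta> t1 t2 (\<delta> x)
                 \<le> (1/2) * (x - \<theta>)^2 + penalty \<delta> t1 t2 \<theta>)
       \<and> (\<forall>\<theta>. (1/2) * (x - \<theta>)^2 + penalty \<delta> t1 t2 \<theta>
                 \<le> (1/2) * (x - \<delta> x)^2 + penalty \<delta> t1 t2 (\<delta> x) \<longrightarrow> \<theta> = \<delta> x)"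
proof -
  interpret thresholding_rule \<delta> t1 t2
    using t_pos zero mono_r mono_l onto_r onto_l by unfold_locales
  have "oriented_integral (\<lambda>t. inv_rule t - x) 0 (\<delta> x) < oriented_integral (\<lambda>t. inv_rule t - x) 0 \<theta>"
    if "\<theta> \<noteq> \<delta> x" for \<theta>
    using that inv_rule_sign strict_mono_inv_rule
    by (intro oriented_integral_strict_argmin) (auto simp: mono_def strict_mono_less_eq)
  then show ?thesis
    unfolding objective_eq_oriented_integral by (metis add_le_cancel_left less_imp_le not_le order_refl)
qed

end
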